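(* Let $\Phi:\ell^\infty(\mathbb Z)\to\ell^\infty(\mathbb Z)$ be a bounded linear map commuting with the backward shift $B$, $(Bv)_n=v_{n+1}$. Let $\phi_0(v)=\Phi(v)_0$ be its $0$-th coordinate functional (so that $\Phi(v)_n=\phi_0(B^nv)$ for all $n$), and decompose $\phi_0=\phi^{ac}+\phi^{s}$, where $\phi^{ac}$ is weak*-continuous (i.e. $\phi^{ac}(v)=\sum_n a_nv_n$ for some $a\in\ell^1(\mathbb Z)$) and $\phi^{s}$ is singular (i.e. $\phi^s$ vanishes on $c_0(\mathbb Z)$). Define $\Phi^{ac}(v)=(\phi^{ac}(B^nv))_{n\in\mathbb Z}$ and $\Phi^{s}(v)=(\phi^{s}(B^nv))_{n\in\mathbb Z}$. Then $\Phi^{ac}$ and $\Phi^s$ both commute with $B$, $\Phi^{ac}$ is weak*-continuous, $\Phi^{ac}(c_0(\mathbb Z))\subseteq c_0(\mathbb Z)$, $\Phi^{s}(c_0(\mathbb Z))=0$, and $\Phi=\Phi^{ac}+\Phi^{s}$. Moreover this is the unique decomposition of $\Phi$ as a sum of a weak*-continuous map and a singular map (a map annihilating $c_0(\mathbb Z)$).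
   Context: $c_0(\mathbb Z)\subseteq\ell^\infty(\mathbb Z)$ denotes the sequences tending to $0$ at $\pm\infty$. A linear map on $\ell^\infty(\mathbb Z)$ is called $\mathbb Z$-equivariant if it commutes with the backward shift $B$. *)

theory Defs
  imports "HOL-Analysis.Analysis"
begin

definition linf :: "(int \<Rightarrow> real) set" where
  "linf = {v. \<exists>C. \<forall>n. \<bar>v n\<bar> \<le> C}"

definition c0 :: "(int \<Rightarrow> real) set" where
  "c0 = {v. (v \<longlongrightarrow> 0) at_top \<and> (v \<longlongrightarrow> 0) at_bot}"

definition lone :: "(int \<Rightarrow> real) set" where
  "lone = {a. (\<lambda>n. \<bar>a n\<bar>) summable_on UNIV}"

definition supnorm :: "(int \<Rightarrow> real) \<Rightarrow> real" where
  "supnorm v = (SUP n. \<bar>v n\<bar>)"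

definition bshift :: "(int \<Rightarrow> real) \<Rightarrow> (int \<Rightarrow> real)" where
  "bshift v = (\<lambda>n. v (n + 1))"

definition bpow :: "int \<Rightarrow> (int \<Rightarrow> real) \<Rightarrow> (int \<Rightarrow> real)" where
  "bpow k v = (\<lambda>n. v (n + k))"

definition linear_on_linf :: "((int \<Rightarrow> real) \<Rightarrow> (int \<Rightarrow> real)) \<Rightarrow> bool" where
  "linear_on_linf F \<longleftrightarrow>
     (\<forall>u\<in>linf. \<forall>v\<in>linf. F (\<lambda>n. u n + v n) = (\<lambda>n. F u n + F v n)) \<and>
     (\<forall>c. \<forall>v\<in>linf. F (\<lambda>n. c * v n) = (\<lambda>n. c * F v n))"

definition bounded_linear_linf :: "((int \<Rightarrow> real) \<Rightarrow> (int \<Rightarrow> real)) \<Rightarrow> bool" where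
  "bounded_linear_linf \<Phi> \<longleftrightarrow> linear_on_linf \<Phi> \<and> (\<forall>v\<in>linf. \<Phi> v \<in> linf) \<and>
     (\<exists>C. \<forall>v\<in>linf. supnorm (\<Phi> v) \<le> C * supnorm v)"

definition commutes_B :: "((int \<Rightarrow> real) \<Rightarrow> (int \<Rightarrow> real)) \<Rightarrow> bool" where
  "commutes_B \<Phi> \<longleftrightarrow> (\<forall>v\<in>linf. \<Phi> (bshift v) = bshift (\<Phi> v))"

definition wstar_fun :: "((int \<Rightarrow> real) \<Rightarrow> real) \<Rightarrow> bool" where
  "wstar_fun \<phi> \<longleftrightarrow> (\<exists>a\<in>lone. \<forall>v\<in>linf. \<phi> v = (\<Sum>\<^sub>\<infinity>n. a n * v n))"

definition wstar_map :: "((int \<Rightarrow> real) \<Rightarrow> (int \<Rightarrow> real)) \<Rightarrow> bool" where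
  "wstar_map \<Psi> \<longleftrightarrow> linear_on_linf \<Psi> \<and> (\<forall>v\<in>linf. \<Psi> v \<in> linf) \<and>
     (\<forall>b\<in>lone. wstar_fun (\<lambda>v. \<Sum>\<^sub>\<infinity>n. b n * \<Psi> v n))"

definition singular_fun :: "((int \<Rightarrow> real) \<Rightarrow> real) \<Rightarrow> bool" where
  "singular_fun \<phi> \<longleftrightarrow> (\<forall>v\<in>c0. \<phi> v = 0)"

definition singular_map :: "((int \<Rightarrow> real) \<Rightarrow> (int \<Rightarrow> real)) \<Rightarrow> bool" where
  "singular_map \<Psi> \<longleftrightarrow> (\<forall>v\<in>c0. \<Psi> v = (\<lambda>n. 0))"

end

theory Submission
  imports Defs
begin

(* Equivariance gives Phi(v)_n = phi_0(B^n v), so Phi is determined by its 0-th coordinate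
   functional and splits along phi_0 = phi_ac + phi_s.  If phi_ac is pairing with a in l1, then
   Phi_ac is the correlation v \<mapsto> (\<Sum>_m a_m v_(m+n))_n: it maps c0 into c0 by dominated
   convergence, and by Fubini, pairing it with b in l1 is pairing v with the convolution b * a,
   so it is weak*-continuous.  A weak*-continuous map is determined by its values on the unit
   vectors e_k, which lie in c0, where any singular map vanishes; this gives uniqueness. *)

subsection \<open>Sequence spaces and shifts\<close>

lemma linfE:
  assumes "v \<in> linf"
  obtains C where "\<And>n. \<bar>v n\<bar> \<le> C"
  using assms unfolding linf_def by auto

lemma linf_add: "u \<in> linf \<Longrightarrow> v \<in> linf \<Longrightarrow> (\<lambda>n. u n + v n) \<in> linf"
proof -
  assume "u \<in> linf" "v \<in> linf"
  then obtain C D where "\<And>n. \<bar>u n\<bar> \<le> C" "\<And>n. \<bar>v n\<bar> \<le> D" by (meson linfE)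
  then have "\<forall>n. \<bar>u n + v n\<bar> \<le> C + D" by (meson abs_triangle_ineq add_mono order_trans)
  then show ?thesis unfolding linf_def by blast
qed

lemma linf_cmult: "v \<in> linf \<Longrightarrow> (\<lambda>n. c * v n) \<in> linf"
proof -
  assume "v \<in> linf"
  then obtain C where "\<And>n. \<bar>v n\<bar> \<le> C" by (meson linfE)
  then have "\<forall>n. \<bar>c * v n\<bar> \<le> \<bar>c\<bar> * C" by (simp add: abs_mult mult_left_mono)
  then show ?thesis unfolding linf_def by blast
qed

lemma c0_subset_linf: "c0 \<subseteq> linf"
proof
  fix v assume "v \<in> c0"
  then have "eventually (\<lambda>n. \<bar>v n\<bar> < 1) at_top" "eventually (\<lambda>n. \<bar>v n\<bar> < 1) at_bot"
    unfolding c0_def using tendstoD[of v 0 _ 1] by auto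
  then obtain M N where M: "\<And>n. n \<le> M \<Longrightarrow> \<bar>v n\<bar> < 1" and N: "\<And>n. n \<ge> N \<Longrightarrow> \<bar>v n\<bar> < 1"
    by (auto simp: eventually_at_top_linorder eventually_at_bot_linorder)
  have "\<bar>v n\<bar> \<le> 1 + (\<Sum>k\<in>{M..N}. \<bar>v k\<bar>)" for n
  proof (cases "n \<in> {M..N}")
    case True
    then have "\<bar>v n\<bar> \<le> (\<Sum>k\<in>{M..N}. \<bar>v k\<bar>)" by (intro member_le_sum) auto
    then show ?thesis by simp
  next
    case False
    then have "\<bar>v n\<bar> < 1" using M N by fastforce
    moreover have "0 \<le> (\<Sum>k\<in>{M..N}. \<bar>v k\<bar>)" by (intro sum_nonneg) auto
    ultimately show ?thesis by linarith
  qed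
  then show "v \<in> linf" unfolding linf_def by blast
qed

lemma bpow_0 [simp]: "bpow 0 v = v"
  unfolding bpow_def by simp

lemma bpow_bpow: "bpow i (bpow j v) = bpow (i + j) v"
  unfolding bpow_def by (simp add: ac_simps)

lemma bshift_bpow: "bshift (bpow k v) = bpow (k + 1) v"
  unfolding bshift_def bpow_def by (simp add: ac_simps)

lemma bpow_linf: "v \<in> linf \<Longrightarrow> bpow k v \<in> linf"
  unfolding linf_def bpow_def by auto

lemma filterlim_add_const_int_at_top: "filterlim (\<lambda>n::int. n + k) at_top at_top"
  unfolding filterlim_at_top
proof
  fix z show "eventually (\<lambda>n. z \<le> n + k) at_top"
    using eventually_ge_at_top[of "z - k"] by eventually_elim simp
qed

lemma filterlim_add_const_int_at_bot: "filterlim (\<lambda>n::int. n + k) at_bot at_bot"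
  unfolding filterlim_at_bot
proof
  fix z show "eventually (\<lambda>n. n + k \<le> z) at_bot"
    using eventually_le_at_bot[of "z - k"] by eventually_elim simp
qed

lemma bpow_c0: "v \<in> c0 \<Longrightarrow> bpow k v \<in> c0"
  unfolding c0_def bpow_def
  using filterlim_compose filterlim_add_const_int_at_top filterlim_add_const_int_at_bot
  by blast

definition unit_seq :: "int \<Rightarrow> int \<Rightarrow> real" where
  "unit_seq k = (\<lambda>n. if n = k then 1 else 0)"

lemma unit_seq_c0: "unit_seq k \<in> c0"
proof -
  have "eventually (\<lambda>n. unit_seq k n = 0) at_top" "eventually (\<lambda>n. unit_seq k n = 0) at_bot"
    using eventually_at_top_not_equal[of k] eventually_at_bot_not_equal[of k]
    by (auto elim: eventually_mono simp: unit_seq_def)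
  then show ?thesis unfolding c0_def by (auto intro: tendsto_eventually)
qed

lemma infsum_mult_unit_seq: "(\<Sum>\<^sub>\<infinity>n. f n * unit_seq k n) = f k"
proof -
  have "(\<Sum>\<^sub>\<infinity>n. f n * unit_seq k n) = (\<Sum>\<^sub>\<infinity>n\<in>{k}. f n * unit_seq k n)"
    by (rule infsum_cong_neutral) (auto simp: unit_seq_def)
  then show ?thesis by (simp add: unit_seq_def)
qed

lemma unit_seq_lone: "unit_seq k \<in> lone"
proof -
  have "(\<lambda>n. \<bar>unit_seq k n\<bar>) summable_on {k}" by simp
  then have "(\<lambda>n. \<bar>unit_seq k n\<bar>) summable_on UNIV"
    by (rule summable_on_cong_neutral[THEN iffD1, rotated -1]) (auto simp: unit_seq_def)
  then show ?thesis unfolding lone_def by simp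
qed

lemma bij_add_const_int: "bij_betw (\<lambda>m. m + n) UNIV (UNIV :: int set)"
  by (rule bij_betwI[of _ _ _ "\<lambda>k. k - n"]) auto

lemma infsum_int_shift: "(\<Sum>\<^sub>\<infinity>m. f (m + n)) = (\<Sum>\<^sub>\<infinity>k::int. f k)"
  using infsum_reindex_bij_betw[OF bij_add_const_int, of f] by simp

lemma has_sum_int_shift: "((\<lambda>m. f (m + n)) has_sum s) UNIV \<longleftrightarrow> (f has_sum s) (UNIV :: int set)"
  using has_sum_reindex_bij_betw[OF bij_add_const_int, of f] by simp

subsection \<open>Pairing bounded sequences with l1\<close>

lemma lone_abs_summable_on: "a \<in> lone \<Longrightarrow> (\<lambda>n. \<bar>a n\<bar>) summable_on A"
  unfolding lone_def by (auto intro: summable_on_subset_banach)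

lemma norm_mult_le_bound: "\<bar>y\<bar> \<le> C \<Longrightarrow> norm (x * y) \<le> C * \<bar>x\<bar>" for x y :: real
  using mult_left_mono[of "\<bar>y\<bar>" C "\<bar>x\<bar>"] by (simp add: abs_mult mult_ac)

lemma lone_pairing_abs_summable_on:
  assumes "a \<in> lone" and "\<And>n. \<bar>v n\<bar> \<le> C"
  shows "(\<lambda>n. norm (a n * v n)) summable_on A"
proof -
  have "(\<lambda>n. C * \<bar>a n\<bar>) summable_on UNIV"
    using lone_abs_summable_on[OF assms(1)] by (rule summable_on_cmult_right)
  moreover have "norm (a n * v n) \<le> C * \<bar>a n\<bar>" for n
    using assms(2) by (rule norm_mult_le_bound)
  ultimately have "(\<lambda>n. norm (a n * v n)) summable_on UNIV"
    by (rule Infinite_Sum.abs_summable_on_comparison_test')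
  then show ?thesis by (rule summable_on_subset_banach) simp
qed

lemma lone_pairing_summable_on:
  assumes "a \<in> lone" and "\<And>n. \<bar>v n\<bar> \<le> C"
  shows "(\<lambda>n. a n * v n) summable_on A"
  using lone_pairing_abs_summable_on[OF assms] by (rule summable_on_iff_abs_summable_on_real[THEN iffD2])

lemma lone_pairing_bound:
  assumes "a \<in> lone" and C: "\<And>n. \<bar>v n\<bar> \<le> C"
  shows "\<bar>\<Sum>\<^sub>\<infinity>n\<in>A. a n * v n\<bar> \<le> C * (\<Sum>\<^sub>\<infinity>n\<in>A. \<bar>a n\<bar>)"
proof -
  have sum_bound: "(\<lambda>n. C * \<bar>a n\<bar>) summable_on A"
    using lone_abs_summable_on[OF assms(1)] by (rule summable_on_cmult_right)
  have "\<bar>\<Sum>\<^sub>\<infinity>n\<in>A. a n * v n\<bar> \<le> (\<Sum>\<^sub>\<infinity>n\<in>A. norm (a n * v n))"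
    using norm_infsum_bound[of "\<lambda>n. a n * v n" A] lone_pairing_abs_summable_on[OF assms] by simp
  also have "\<dots> \<le> (\<Sum>\<^sub>\<infinity>n\<in>A. C * \<bar>a n\<bar>)"
    using lone_pairing_abs_summable_on[OF assms] sum_bound
    by (rule infsum_mono) (rule norm_mult_le_bound[OF C])
  also have "\<dots> = C * (\<Sum>\<^sub>\<infinity>n\<in>A. \<bar>a n\<bar>)" by (rule infsum_cmult_right')
  finally show ?thesis .
qed

lemma lone_pairing_add:
  assumes "a \<in> lone" "u \<in> linf" "v \<in> linf"
  shows "(\<Sum>\<^sub>\<infinity>n. a n * (u n + v n)) = (\<Sum>\<^sub>\<infinity>n. a n * u n) + (\<Sum>\<^sub>\<infinity>n. a n * v n)"
proof -
  obtain C D where "\<And>n. \<bar>u n\<bar> \<le> C" "\<And>n. \<bar>v n\<bar> \<le> D" using assms(2,3) by (meson linfE)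
  then have "(\<Sum>\<^sub>\<infinity>n. a n * u n + a n * v n) = (\<Sum>\<^sub>\<infinity>n. a n * u n) + (\<Sum>\<^sub>\<infinity>n. a n * v n)"
    by (intro infsum_add lone_pairing_summable_on[OF assms(1)])
  then show ?thesis by (simp add: distrib_left)
qed

lemma lone_pairing_cmult: "(\<Sum>\<^sub>\<infinity>n. a n * (c * v n)) = c * (\<Sum>\<^sub>\<infinity>n. a n * (v n :: real))"
  using infsum_cmult_right'[of c "\<lambda>n. a n * v n" UNIV] by (simp add: ac_simps)

lemma lone_pairing_tendsto_zero:
  fixes w :: "'b \<Rightarrow> int \<Rightarrow> real"
  assumes a: "a \<in> lone" and C: "\<And>x m. \<bar>w x m\<bar> \<le> C"
    and lim: "\<And>m. ((\<lambda>x. w x m) \<longlongrightarrow> 0) F"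
  shows "((\<lambda>x. \<Sum>\<^sub>\<infinity>m. a m * w x m) \<longlongrightarrow> 0) F"
proof (rule tendstoI)
  fix e :: real assume e: "e > 0"
  have C0: "C \<ge> 0" using C by (meson abs_ge_zero order_trans)
  \<comment> \<open>\<open>C + 1\<close> rather than \<open>C\<close>, so that \<open>d\<close> is positive also when \<open>C = 0\<close>.\<close>
  define d where "d = e / (2 * (C + 1))"
  have "d > 0" unfolding d_def using e C0 by simp
  then obtain S where S: "finite S" "dist (\<Sum>n\<in>S. \<bar>a n\<bar>) (\<Sum>\<^sub>\<infinity>n. \<bar>a n\<bar>) \<le> d"
    using infsum_finite_approximation lone_abs_summable_on[OF a] by blast
  have split: "(\<Sum>\<^sub>\<infinity>n. f n) = (\<Sum>n\<in>S. f n) + (\<Sum>\<^sub>\<infinity>n\<in>- S. f n)"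
    if "f summable_on UNIV" for f :: "int \<Rightarrow> real"
  proof -
    have "f summable_on - S" using that by (rule summable_on_subset_banach) simp
    then show ?thesis
      using infsum_Un_disjoint[of f S "- S"] S(1) by (simp add: Compl_partition)
  qed
  have small_tail: "(\<Sum>\<^sub>\<infinity>n\<in>- S. \<bar>a n\<bar>) \<le> d"
    using split[OF lone_abs_summable_on[OF a]] S(2) by (simp add: dist_real_def)
  have tail: "\<bar>\<Sum>\<^sub>\<infinity>m\<in>- S. a m * w x m\<bar> \<le> e / 2" for x
  proof -
    have "\<bar>\<Sum>\<^sub>\<infinity>m\<in>- S. a m * w x m\<bar> \<le> (C + 1) * (\<Sum>\<^sub>\<infinity>m\<in>- S. \<bar>a m\<bar>)"
      using C by (intro lone_pairing_bound[OF a]) (meson add_increasing2 zero_le_one)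
    also have "\<dots> \<le> (C + 1) * d" using small_tail C0 by (intro mult_left_mono) simp_all
    also have "\<dots> = e / 2" unfolding d_def using C0 by (simp add: field_simps)
    finally show ?thesis .
  qed
  have "((\<lambda>x. \<Sum>m\<in>S. a m * w x m) \<longlongrightarrow> 0) F"
    by (intro tendsto_null_sum tendsto_mult_right_zero lim)
  then have "eventually (\<lambda>x. \<bar>\<Sum>m\<in>S. a m * w x m\<bar> < e / 2) F"
    using e by (auto dest: tendstoD[of _ 0 F "e / 2"])
  then show "eventually (\<lambda>x. dist (\<Sum>\<^sub>\<infinity>m. a m * w x m) 0 < e) F"
  proof eventually_elim
    case (elim x)
    then show ?case
      using split[OF lone_pairing_summable_on[OF a C]] tail[of x] by simp
  qed
qed

subsection \<open>Correlation with an l1 sequence\<close>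

definition correlation :: "(int \<Rightarrow> real) \<Rightarrow> (int \<Rightarrow> real) \<Rightarrow> int \<Rightarrow> real" where
  "correlation a v = (\<lambda>n. \<Sum>\<^sub>\<infinity>m. a m * v (m + n))"

definition seq_conv :: "(int \<Rightarrow> real) \<Rightarrow> (int \<Rightarrow> real) \<Rightarrow> int \<Rightarrow> real" where
  "seq_conv b a = (\<lambda>k. \<Sum>\<^sub>\<infinity>n. b n * a (k - n))"

lemma correlation_linf:
  assumes "a \<in> lone" and "v \<in> linf"
  shows "correlation a v \<in> linf"
proof -
  obtain C where C: "\<And>n. \<bar>v n\<bar> \<le> C" using assms(2) by (meson linfE)
  have "\<bar>correlation a v n\<bar> \<le> C * (\<Sum>\<^sub>\<infinity>m. \<bar>a m\<bar>)" for n
    unfolding correlation_def using C by (intro lone_pairing_bound[OF assms(1)])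
  then show ?thesis unfolding linf_def by blast
qed

lemma linear_on_linf_correlation:
  assumes a: "a \<in> lone"
  shows "linear_on_linf (correlation a)"
  unfolding linear_on_linf_def
proof (intro conjI ballI allI ext)
  fix u v n assume "u \<in> linf" "v \<in> linf"
  then show "correlation a (\<lambda>n. u n + v n) n = correlation a u n + correlation a v n"
    using lone_pairing_add[OF a bpow_linf bpow_linf, of u v n]
    unfolding correlation_def bpow_def by simp
next
  fix c v n
  show "correlation a (\<lambda>n. c * v n) n = c * correlation a v n"
    unfolding correlation_def by (rule lone_pairing_cmult)
qed

lemma correlation_c0:
  assumes a: "a \<in> lone" and v: "v \<in> c0"
  shows "correlation a v \<in> c0"
proof -
  have "v \<in> linf" using v c0_subset_linf by blast
  then obtain C where C: "\<And>n. \<bar>v n\<bar> \<le> C" by (meson linfE)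
  have shifts: "((\<lambda>n. v (m + n)) \<longlongrightarrow> 0) at_top" "((\<lambda>n. v (m + n)) \<longlongrightarrow> 0) at_bot" for m
    using bpow_c0[OF v, of m] unfolding c0_def bpow_def by (simp_all add: add.commute)
  have "((\<lambda>n. \<Sum>\<^sub>\<infinity>m. a m * v (m + n)) \<longlongrightarrow> 0) F"
    if "\<And>m. ((\<lambda>n. v (m + n)) \<longlongrightarrow> 0) F" for F :: "int filter"
    using lone_pairing_tendsto_zero[OF a, of "\<lambda>n m. v (m + n)"] C that by blast
  then have "((\<lambda>n. \<Sum>\<^sub>\<infinity>m. a m * v (m + n)) \<longlongrightarrow> 0) at_top"
    "((\<lambda>n. \<Sum>\<^sub>\<infinity>m. a m * v (m + n)) \<longlongrightarrow> 0) at_bot"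
    using shifts by blast+
  then show ?thesis unfolding c0_def correlation_def by simp
qed

lemma seq_conv_kernel_summable:
  assumes a: "a \<in> lone" and b: "b \<in> lone"
  shows "(\<lambda>(n, k). \<bar>b n\<bar> * \<bar>a (k - n)\<bar>) summable_on UNIV"
proof -
  have "((\<lambda>k. \<bar>a k\<bar>) has_sum (\<Sum>\<^sub>\<infinity>k. \<bar>a k\<bar>)) UNIV"
    using lone_abs_summable_on[OF a] by (rule has_sum_infsum)
  then have rows: "((\<lambda>k. \<bar>b n\<bar> * \<bar>a (k - n)\<bar>) has_sum (\<bar>b n\<bar> * (\<Sum>\<^sub>\<infinity>k. \<bar>a k\<bar>))) UNIV" for n
    using has_sum_int_shift[of "\<lambda>k. \<bar>a k\<bar>" "- n"] by (simp add: has_sum_cmult_right)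
  have "(\<lambda>(n, k). \<bar>b n\<bar> * \<bar>a (k - n)\<bar>) summable_on UNIV \<times> UNIV"
  proof (rule summable_on_SigmaI[where g = "\<lambda>n. \<bar>b n\<bar> * (\<Sum>\<^sub>\<infinity>k. \<bar>a k\<bar>)"])
    show "(\<lambda>n. \<bar>b n\<bar> * (\<Sum>\<^sub>\<infinity>k. \<bar>a k\<bar>)) summable_on UNIV"
      using lone_abs_summable_on[OF b] by (rule summable_on_cmult_left)
  qed (use rows in auto)
  then show ?thesis by simp
qed

lemma seq_conv_lone:
  assumes a: "a \<in> lone" and b: "b \<in> lone"
  shows "seq_conv b a \<in> lone"
proof -
  define G where "G = (\<lambda>(k, n). \<bar>b n\<bar> * \<bar>a (k - n)\<bar>)"
  have G: "G summable_on UNIV \<times> UNIV"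
    using seq_conv_kernel_summable[OF a b] summable_on_swap unfolding G_def by fastforce
  have G_rows: "(\<lambda>n. G (k, n)) summable_on UNIV" for k
    using summable_on_SigmaD1[of "\<lambda>k n. G (k, n)" UNIV "\<lambda>_. UNIV"] G by simp
  have "(\<lambda>k. \<Sum>\<^sub>\<infinity>n. G (k, n)) summable_on UNIV"
    using summable_on_SigmaD[OF G] G_rows by simp
  moreover have "norm (seq_conv b a k) \<le> (\<Sum>\<^sub>\<infinity>n. G (k, n))" for k
    using norm_infsum_bound[of "\<lambda>n. b n * a (k - n)" UNIV] G_rows[of k]
    unfolding seq_conv_def G_def by (simp add: abs_mult)
  ultimately have "(\<lambda>k. norm (seq_conv b a k)) summable_on UNIV"
    by (rule Infinite_Sum.abs_summable_on_comparison_test')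
  then show ?thesis unfolding lone_def by simp
qed

lemma pairing_correlation:
  assumes a: "a \<in> lone" and b: "b \<in> lone" and v: "v \<in> linf"
  shows "(\<Sum>\<^sub>\<infinity>n. b n * correlation a v n) = (\<Sum>\<^sub>\<infinity>k. seq_conv b a k * v k)"
proof -
  obtain C where C: "\<And>n. \<bar>v n\<bar> \<le> C" using v by (meson linfE)
  define F where "F = (\<lambda>n k. b n * (a (k - n) * v k))"
  have "(\<lambda>p. C * (case p of (n, k) \<Rightarrow> \<bar>b n\<bar> * \<bar>a (k - n)\<bar>)) summable_on UNIV"
    using seq_conv_kernel_summable[OF a b] by (rule summable_on_cmult_right)
  moreover have "norm (F n k) \<le> C * (\<bar>b n\<bar> * \<bar>a (k - n)\<bar>)" for n k
    using mult_left_mono[OF C, of "\<bar>b n\<bar> * \<bar>a (k - n)\<bar>"]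
    unfolding F_def by (simp add: abs_mult mult_ac)
  ultimately have "(\<lambda>p. norm ((\<lambda>(n, k). F n k) p)) summable_on UNIV"
    by (intro Infinite_Sum.abs_summable_on_comparison_test') auto
  then have F: "(\<lambda>(n, k). F n k) summable_on UNIV \<times> UNIV"
    by (simp only: UNIV_Times_UNIV summable_on_iff_abs_summable_on_real[symmetric])
  have "correlation a v n = (\<Sum>\<^sub>\<infinity>k. a (k - n) * v k)" for n
    unfolding correlation_def using infsum_int_shift[of "\<lambda>k. a (k - n) * v k" n] by simp
  then have "(\<Sum>\<^sub>\<infinity>n. b n * correlation a v n) = (\<Sum>\<^sub>\<infinity>n. \<Sum>\<^sub>\<infinity>k. F n k)"
    unfolding F_def by (simp add: infsum_cmult_right')
  also have "\<dots> = (\<Sum>\<^sub>\<infinity>k. \<Sum>\<^sub>\<infinity>n. F n k)"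
    using F by (rule infsum_swap_banach)
  also have "\<dots> = (\<Sum>\<^sub>\<infinity>k. seq_conv b a k * v k)"
    unfolding F_def seq_conv_def
    using infsum_cmult_left'[of "\<lambda>n. b n * a (_ - n)" "v _" UNIV] by (simp add: mult_ac)
  finally show ?thesis .
qed

lemma wstar_map_correlation:
  assumes "a \<in> lone"
  shows "wstar_map (correlation a)"
  unfolding wstar_map_def wstar_fun_def
proof (intro conjI ballI)
  show "linear_on_linf (correlation a)" using assms by (rule linear_on_linf_correlation)
next
  fix v assume "v \<in> linf"
  then show "correlation a v \<in> linf" using assms by (intro correlation_linf)
next
  fix b assume "b \<in> lone"
  then show "\<exists>c\<in>lone. \<forall>v\<in>linf. (\<Sum>\<^sub>\<infinity>n. b n * correlation a v n) = (\<Sum>\<^sub>\<infinity>n. c n * v n)"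
    using assms pairing_correlation seq_conv_lone by blast
qed

lemma wstar_map_cong:
  assumes "wstar_map \<Psi>" and eq: "\<And>v. v \<in> linf \<Longrightarrow> \<Psi>' v = \<Psi> v"
  shows "wstar_map \<Psi>'"
  using assms(1) unfolding wstar_map_def wstar_fun_def linear_on_linf_def
  by (auto simp: eq linf_add linf_cmult)

lemma wstar_map_coordinate:
  assumes "wstar_map \<Psi>" and v: "v \<in> linf"
  shows "\<Psi> v n = (\<Sum>\<^sub>\<infinity>k. \<Psi> (unit_seq k) n * v k)"
proof -
  obtain c where c: "\<And>v. v \<in> linf \<Longrightarrow> (\<Sum>\<^sub>\<infinity>m. unit_seq n m * \<Psi> v m) = (\<Sum>\<^sub>\<infinity>k. c k * v k)"
    using assms(1) unit_seq_lone[of n] unfolding wstar_map_def wstar_fun_def by blast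
  have coord: "\<Psi> v n = (\<Sum>\<^sub>\<infinity>k. c k * v k)" if "v \<in> linf" for v
    using c[OF that] infsum_mult_unit_seq[of "\<Psi> v" n] by (simp add: mult.commute)
  have "\<Psi> (unit_seq k) n = c k" for k
    using coord[of "unit_seq k"] unit_seq_c0 c0_subset_linf infsum_mult_unit_seq by auto
  then show ?thesis using coord[OF v] by simp
qed

lemma wstar_map_eqI:
  assumes "wstar_map \<Psi>1" "wstar_map \<Psi>2" "\<And>k. \<Psi>1 (unit_seq k) = \<Psi>2 (unit_seq k)"
    and "v \<in> linf"
  shows "\<Psi>1 v = \<Psi>2 v"
  using wstar_map_coordinate[OF assms(1,4)] wstar_map_coordinate[OF assms(2,4)] assms(3)
  by auto

subsection \<open>Shift-equivariant maps\<close>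

lemma commutes_B_bpow_nat:
  assumes "commutes_B \<Phi>" and "v \<in> linf"
  shows "\<Phi> (bpow (int j) v) = bpow (int j) (\<Phi> v)"
proof (induction j)
  case (Suc j)
  have "\<Phi> (bpow (int (Suc j)) v) = \<Phi> (bshift (bpow (int j) v))"
    by (simp add: bshift_bpow add.commute)
  also have "\<dots> = bshift (\<Phi> (bpow (int j) v))"
    using assms bpow_linf unfolding commutes_B_def by blast
  also have "\<dots> = bpow (int (Suc j)) (\<Phi> v)"
    using Suc by (simp add: bshift_bpow add.commute)
  finally show ?case .
qed simp

lemma commutes_B_bpow:
  assumes comm: "commutes_B \<Phi>" and v: "v \<in> linf"
  shows "\<Phi> (bpow k v) = bpow k (\<Phi> v)"
proof (cases "k \<ge> 0")
  case True
  then show ?thesis using commutes_B_bpow_nat[OF comm v, of "nat k"] by simp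
next
  case False
  then have k: "k = - int (nat (- k))" by simp
  have "\<Phi> v = \<Phi> (bpow (int (nat (- k))) (bpow k v))"
    by (subst k) (simp add: bpow_bpow)
  also have "\<dots> = bpow (int (nat (- k))) (\<Phi> (bpow k v))"
    using commutes_B_bpow_nat[OF comm bpow_linf[OF v]] .
  finally have "bpow k (\<Phi> v) = bpow (k + int (nat (- k))) (\<Phi> (bpow k v))"
    by (simp add: bpow_bpow)
  then show ?thesis using False by simp
qed

definition equivariant_extension ::
    "((int \<Rightarrow> real) \<Rightarrow> real) \<Rightarrow> (int \<Rightarrow> real) \<Rightarrow> int \<Rightarrow> real" where
  "equivariant_extension \<phi> v = (\<lambda>n. \<phi> (bpow n v))"

lemma commutes_B_equivariant_extension: "commutes_B (equivariant_extension \<phi>)"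
  unfolding commutes_B_def equivariant_extension_def
  by (simp add: bshift_def bpow_def ac_simps)

lemma commutes_B_eq_equivariant_extension:
  assumes "commutes_B \<Phi>" and "v \<in> linf"
  shows "\<Phi> v = equivariant_extension (\<lambda>u. \<Phi> u 0) v"
  unfolding equivariant_extension_def commutes_B_bpow[OF assms]
  by (simp add: bpow_def)

lemma singular_map_equivariant_extension:
  "singular_fun \<phi> \<Longrightarrow> singular_map (equivariant_extension \<phi>)"
  unfolding singular_fun_def singular_map_def equivariant_extension_def
  by (simp add: bpow_c0)

lemma equivariant_extension_pairing:
  assumes "\<And>u. u \<in> linf \<Longrightarrow> \<phi> u = (\<Sum>\<^sub>\<infinity>n. a n * u n)" and "v \<in> linf"
  shows "equivariant_extension \<phi> v = correlation a v"
  unfolding equivariant_extension_def correlation_def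
  by (simp add: assms bpow_linf) (simp add: bpow_def)

lemma equivariant_extension_eq_correlation:
  "wstar_fun \<phi> \<Longrightarrow> \<exists>a\<in>lone. \<forall>v\<in>linf. equivariant_extension \<phi> v = correlation a v"
  unfolding wstar_fun_def using equivariant_extension_pairing by meson

lemma wstar_map_equivariant_extension:
  assumes "wstar_fun \<phi>"
  shows "wstar_map (equivariant_extension \<phi>)"
proof -
  obtain a where "a \<in> lone" and "\<forall>v\<in>linf. equivariant_extension \<phi> v = correlation a v"
    using equivariant_extension_eq_correlation[OF assms] by blast
  then show ?thesis using wstar_map_cong wstar_map_correlation by blast
qed

lemma equivariant_extension_c0:
  assumes "wstar_fun \<phi>" and v: "v \<in> c0"
  shows "equivariant_extension \<phi> v \<in> c0"
proof -
  obtain a where "a \<in> lone" and "\<forall>v\<in>linf. equivariant_extension \<phi> v = correlation a v"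
    using equivariant_extension_eq_correlation[OF assms(1)] by blast
  moreover have "v \<in> linf" using v c0_subset_linf by blast
  ultimately show ?thesis using correlation_c0 v by simp
qed

lemma equivariant_extension_split:
  assumes "commutes_B \<Phi>" and "\<forall>u\<in>linf. \<Phi> u 0 = \<phi>1 u + \<phi>2 u" and v: "v \<in> linf"
  shows "\<Phi> v = (\<lambda>n. equivariant_extension \<phi>1 v n + equivariant_extension \<phi>2 v n)"
  unfolding commutes_B_eq_equivariant_extension[OF assms(1) v] equivariant_extension_def
  using assms(2) bpow_linf[OF v] by simp

lemma wstar_singular_split_unique:
  assumes "wstar_map \<Psi>1" "singular_map \<Psi>2" "wstar_map \<Psi>1'" "singular_map \<Psi>2'"
    and split: "\<And>u. u \<in> linf \<Longrightarrow> (\<lambda>n. \<Psi>1 u n + \<Psi>2 u n) = (\<lambda>n. \<Psi>1' u n + \<Psi>2' u n)"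
    and v: "v \<in> linf"
  shows "\<Psi>1 v = \<Psi>1' v \<and> \<Psi>2 v = \<Psi>2' v"
proof -
  have "\<Psi>1 (unit_seq k) = \<Psi>1' (unit_seq k)" for k
  proof -
    have "\<Psi>2 (unit_seq k) = (\<lambda>n. 0)" "\<Psi>2' (unit_seq k) = (\<lambda>n. 0)"
      using assms(2,4) unit_seq_c0 unfolding singular_map_def by auto
    moreover have "unit_seq k \<in> linf" using unit_seq_c0 c0_subset_linf by auto
    ultimately show ?thesis using split[of "unit_seq k"] by simp
  qed
  then have "\<Psi>1 v = \<Psi>1' v" by (rule wstar_map_eqI[OF assms(1,3) _ v])
  moreover have "\<Psi>1 v n + \<Psi>2 v n = \<Psi>1' v n + \<Psi>2' v n" for n
    using fun_cong[OF split[OF v], of n] by simp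
  ultimately show ?thesis by auto
qed

theorem proposition2p1:
  fixes \<Phi> :: "(int \<Rightarrow> real) \<Rightarrow> (int \<Rightarrow> real)"
    and \<phi>ac \<phi>s :: "(int \<Rightarrow> real) \<Rightarrow> real"
  assumes bl: "bounded_linear_linf \<Phi>"
    and comm: "commutes_B \<Phi>"
    and decomp: "\<forall>v\<in>linf. \<Phi> v 0 = \<phi>ac v + \<phi>s v"
    and ac: "wstar_fun \<phi>ac"
    and sing: "singular_fun \<phi>s"
  defines "\<Phi>ac \<equiv> (\<lambda>v. \<lambda>n. \<phi>ac (bpow n v))"
    and "\<Phi>s \<equiv> (\<lambda>v. \<lambda>n. \<phi>s (bpow n v))"
  shows "commutes_B \<Phi>ac \<and> commutes_B \<Phi>s \<and> wstar_map \<Phi>ac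
    \<and> (\<forall>v\<in>c0. \<Phi>ac v \<in> c0) \<and> singular_map \<Phi>s
    \<and> (\<forall>v\<in>linf. \<Phi> v = (\<lambda>n. \<Phi>ac v n + \<Phi>s v n))
    \<and> (\<forall>\<Psi>1 \<Psi>2. wstar_map \<Psi>1 \<and> singular_map \<Psi>2
          \<and> (\<forall>v\<in>linf. \<Phi> v = (\<lambda>n. \<Psi>1 v n + \<Psi>2 v n))
        \<longrightarrow> (\<forall>v\<in>linf. \<Psi>1 v = \<Phi>ac v \<and> \<Psi>2 v = \<Phi>s v))"
proof -
  have \<Phi>ac: "\<Phi>ac = equivariant_extension \<phi>ac" and \<Phi>s: "\<Phi>s = equivariant_extension \<phi>s"
    unfolding \<Phi>ac_def \<Phi>s_def equivariant_extension_def by simp_all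
  have wstar: "wstar_map \<Phi>ac"
    unfolding \<Phi>ac using ac by (rule wstar_map_equivariant_extension)
  have singular: "singular_map \<Phi>s"
    unfolding \<Phi>s using sing by (rule singular_map_equivariant_extension)
  have split: "\<forall>v\<in>linf. \<Phi> v = (\<lambda>n. \<Phi>ac v n + \<Phi>s v n)"
    unfolding \<Phi>ac \<Phi>s using equivariant_extension_split[OF comm decomp] by blast
  have unique: "\<forall>v\<in>linf. \<Psi>1 v = \<Phi>ac v \<and> \<Psi>2 v = \<Phi>s v"
    if \<Psi>1: "wstar_map \<Psi>1" and \<Psi>2: "singular_map \<Psi>2"
      and split': "\<forall>v\<in>linf. \<Phi> v = (\<lambda>n. \<Psi>1 v n + \<Psi>2 v n)" for \<Psi>1 \<Psi>2
  proof
    fix v assume v: "v \<in> linf"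
    have "(\<lambda>n. \<Psi>1 u n + \<Psi>2 u n) = (\<lambda>n. \<Phi>ac u n + \<Phi>s u n)" if "u \<in> linf" for u
      using split'[rule_format, OF that, symmetric] split[rule_format, OF that] by (rule trans)
    then show "\<Psi>1 v = \<Phi>ac v \<and> \<Psi>2 v = \<Phi>s v"
      by (rule wstar_singular_split_unique[OF \<Psi>1 \<Psi>2 wstar singular _ v])
  qed
  have "commutes_B \<Phi>ac" "commutes_B \<Phi>s" "\<forall>v\<in>c0. \<Phi>ac v \<in> c0"
    unfolding \<Phi>ac \<Phi>s
    by (simp_all add: commutes_B_equivariant_extension equivariant_extension_c0[OF ac])
  then show ?thesis using wstar singular split unique by blast
qed

end
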